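(* Let $x,y\ge2$ be coprime integers, $p\ge 2$, $q=pxy-1$, and let $G$ be the fundamental group of the complement of the $(p,q)$-cable of the $(x,y)$-torus knot, with canonical meridian and longitude $\mu_C,\lambda_C$ of the cable. Then for every positive integer $\beta$ and every left-orderable quotient $Q$ of $G$, the image of $\mu_C^{pq\beta-1}\lambda_C^{\beta}$ in $Q$ is not the identity.
   Context: Explicitly, $G$ is generated by $a,b,t$ with relations $a^x=b^y$ and $\mu^q\lambda^p=t^p$, where $\mu=b^ja^i$, $\lambda=\mu^{-xy}a^x$ with $xj+yi=1$; and $\mu_C=\mu^u\lambda^vt^{-v}$, $\lambda_C=\mu_C^{-pq}t^p$ with $pu-qv=1$. A left-orderable group is a nontrivial group admitting a total order invariant under left multiplication. *)

theory Defs
  imports "HOL-Algebra.Algebra"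
begin

definition left_orderable :: "('a, 'b) monoid_scheme \<Rightarrow> bool" where
  "left_orderable G \<longleftrightarrow> group G \<and> carrier G \<noteq> {\<one>\<^bsub>G\<^esub>} \<and>
    (\<exists>le :: 'a \<Rightarrow> 'a \<Rightarrow> bool.
       (\<forall>g\<in>carrier G. le g g) \<and>
       (\<forall>g\<in>carrier G. \<forall>h\<in>carrier G. le g h \<and> le h g \<longrightarrow> g = h) \<and>
       (\<forall>g\<in>carrier G. \<forall>h\<in>carrier G. \<forall>k\<in>carrier G. le g h \<and> le h k \<longrightarrow> le g k) \<and>
       (\<forall>g\<in>carrier G. \<forall>h\<in>carrier G. le g h \<or> le h g) \<and>
       (\<forall>g\<in>carrier G. \<forall>h\<in>carrier G. \<forall>k\<in>carrier G.
          le h k \<longrightarrow> le (g \<otimes>\<^bsub>G\<^esub> h) (g \<otimes>\<^bsub>G\<^esub> k)))"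

end

theory Submission
  imports Defs
begin

text \<open>
  Let z = a^x = b^y. The cable relation t^p = mu^q lam^p makes t^p commute with mu and lam,
  hence with mu_C, so the filling relation mu_C^(pq beta - 1) lam_C^beta = 1 collapses to
  mu_C = t^(p beta). As pu - qv = 1, the pair (mu, lam) can be recovered from
  (mu^u lam^v, mu^q lam^p) = (t^(p beta + v), t^p); this gives mu = t^M and z = mu^(xy) lam = t^N
  with M = p^2 beta >= N = p beta + 1, so that mu^N = z^M.

  In a left-ordered group z is not 1, the group being torsion-free and nontrivial; reversing the
  order if necessary, z > 1. Dividing i by x and j by y gives mu = b^j a^i = z^c b^s a^r with
  0 < r < x and 0 < s < y (neither remainder vanishes, by the Bezout identity xj + yi = 1),
  so that a^r < z and b^s < z, and the same identity forces c <= -1. Hence mu < z^(c+2) <= z and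
  mu^N < z^N <= z^M, a contradiction.
\<close>

definition (in group) centralizer :: "'a \<Rightarrow> 'a set" where
  "centralizer g = {h \<in> carrier G. g \<otimes> h = h \<otimes> g}"

lemma (in group) centralizer_sym:
  "g \<in> carrier G \<Longrightarrow> h \<in> centralizer g \<Longrightarrow> g \<in> centralizer h"
  unfolding centralizer_def by simp

lemma (in group) subgroup_centralizer:
  assumes g: "g \<in> carrier G"
  shows "subgroup (centralizer g) G"
proof
  fix h k assume "h \<in> centralizer g" and "k \<in> centralizer g"
  then have h: "h \<in> carrier G" "g \<otimes> h = h \<otimes> g" and k: "k \<in> carrier G" "g \<otimes> k = k \<otimes> g"
    unfolding centralizer_def by auto
  have "g \<otimes> (h \<otimes> k) = h \<otimes> (g \<otimes> k)"
    using g h k(1) by (simp flip: m_assoc)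
  also have "\<dots> = (h \<otimes> k) \<otimes> g"
    using g h k by (simp add: m_assoc)
  finally show "h \<otimes> k \<in> centralizer g"
    using h k unfolding centralizer_def by simp
next
  fix h assume "h \<in> centralizer g"
  then have h: "h \<in> carrier G" "g \<otimes> h = h \<otimes> g"
    unfolding centralizer_def by auto
  have "h \<otimes> (g \<otimes> inv h) = (h \<otimes> g) \<otimes> inv h"
    using g h(1) by (simp add: m_assoc)
  also have "\<dots> = (g \<otimes> h) \<otimes> inv h"
    using h(2) by simp
  also have "\<dots> = g"
    using g h(1) by (simp add: m_assoc)
  finally have "h \<otimes> (g \<otimes> inv h) = g" .
  then have "inv h \<otimes> g = g \<otimes> inv h"
    using g h by (simp add: inv_solve_left')
  then show "inv h \<in> centralizer g"
    using h unfolding centralizer_def by simp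
qed (auto simp: centralizer_def g)

lemma (in group) centralizer_self: "g \<in> carrier G \<Longrightarrow> g \<in> centralizer g"
  unfolding centralizer_def by simp

lemma (in group) centralizer_int_pow_closed:
  "g \<in> carrier G \<Longrightarrow> h \<in> centralizer g \<Longrightarrow> h [^] (k::int) \<in> centralizer g"
  by (rule subgroup_int_pow_closed[OF subgroup_centralizer])

lemma (in group) centralizer_mult_closed:
  "g \<in> carrier G \<Longrightarrow> h \<in> centralizer g \<Longrightarrow> k \<in> centralizer g \<Longrightarrow> h \<otimes> k \<in> centralizer g"
  by (rule subgroup.m_closed[OF subgroup_centralizer])

lemma (in group) int_pow_mem_centralizer_int_pow:
  assumes "g \<in> carrier G" "h \<in> centralizer g"
  shows "h [^] (n::int) \<in> centralizer (g [^] (m::int))"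
proof -
  have h: "h \<in> carrier G" using assms(2) unfolding centralizer_def by simp
  have "g [^] m \<in> centralizer h"
    using centralizer_int_pow_closed[OF h centralizer_sym[OF assms]] .
  then have "h \<in> centralizer (g [^] m)"
    using h centralizer_sym by blast
  then show ?thesis
    using assms(1) by (simp add: centralizer_int_pow_closed)
qed

lemma (in group) int_pow_mult_int_pow_commuting:
  assumes "g \<in> carrier G" "h \<in> centralizer g"
  shows "(g [^] (m1::int) \<otimes> h [^] (n1::int)) \<otimes> (g [^] (m2::int) \<otimes> h [^] (n2::int))
         = g [^] (m1 + m2) \<otimes> h [^] (n1 + n2)"
proof -
  have h: "h \<in> carrier G" using assms(2) unfolding centralizer_def by simp
  have "h [^] n1 \<otimes> g [^] m2 = g [^] m2 \<otimes> h [^] n1"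
    using int_pow_mem_centralizer_int_pow[OF assms] unfolding centralizer_def by simp
  then have "(g [^] m1 \<otimes> h [^] n1) \<otimes> (g [^] m2 \<otimes> h [^] n2)
      = (g [^] m1 \<otimes> g [^] m2) \<otimes> (h [^] n1 \<otimes> h [^] n2)"
    using assms(1) h by (simp add: m_assoc flip: m_assoc[of "h [^] n1"])
  then show ?thesis
    using assms(1) h by (simp add: int_pow_mult)
qed

lemma (in group) int_pow_mult_int_pow_pow_commuting:
  assumes "g \<in> carrier G" "h \<in> centralizer g"
  shows "(g [^] (m::int) \<otimes> h [^] (n::int)) [^] (k::int) = g [^] (m * k) \<otimes> h [^] (n * k)"
proof -
  have h: "h \<in> carrier G" using assms(2) unfolding centralizer_def by simp
  have "g [^] m \<otimes> h [^] n = h [^] n \<otimes> g [^] m"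
    using int_pow_mem_centralizer_int_pow[OF assms] unfolding centralizer_def by simp
  then have "(g [^] m \<otimes> h [^] n) [^] k = (g [^] m) [^] k \<otimes> (h [^] n) [^] k"
    by (rule int_pow_mult_distrib) (simp_all add: assms(1) h)
  then show ?thesis
    using assms(1) h by (simp add: int_pow_pow)
qed

lemma (in group) unimodular_int_pow_solve:
  assumes "g \<in> carrier G" "h \<in> centralizer g" and det: "p * u - q * v = (1::int)"
  shows "g = (g [^] u \<otimes> h [^] v) [^] p \<otimes> (g [^] q \<otimes> h [^] p) [^] (- v)"
    and "h = (g [^] u \<otimes> h [^] v) [^] (- q) \<otimes> (g [^] q \<otimes> h [^] p) [^] u"
proof -
  have h: "h \<in> carrier G" using assms(2) unfolding centralizer_def by simp
  have "u * p + q * - v = 1" "v * p + p * - v = 0" "u * - q + q * u = 0" "v * - q + p * u = 1"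
    using det by (simp_all add: algebra_simps)
  then show "g = (g [^] u \<otimes> h [^] v) [^] p \<otimes> (g [^] q \<otimes> h [^] p) [^] (- v)"
    and "h = (g [^] u \<otimes> h [^] v) [^] (- q) \<otimes> (g [^] q \<otimes> h [^] p) [^] u"
    using assms(1) h
    by (simp_all add: int_pow_mult_int_pow_pow_commuting[OF assms(1,2)]
                      int_pow_mult_int_pow_commuting[OF assms(1,2)])
qed

lemma (in group) eq_int_pow_of_relation:
  assumes "g \<in> carrier G" "h \<in> centralizer g"
    and rel: "g [^] (n * k - 1) \<otimes> (g [^] (- n) \<otimes> h) [^] k = \<one>"
  shows "g = h [^] (k::int)"
proof -
  have h: "h \<in> carrier G" using assms(2) unfolding centralizer_def by simp
  have "(g [^] (- n) \<otimes> h) [^] k = g [^] (- n * k) \<otimes> h [^] k"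
    using int_pow_mult_int_pow_pow_commuting[OF assms(1,2), of "- n" 1 k] h by simp
  then have "g [^] (n * k - 1) \<otimes> (g [^] (- n) \<otimes> h) [^] k
      = (g [^] (n * k - 1) \<otimes> g [^] (- n * k)) \<otimes> h [^] k"
    using assms(1) h by (simp add: m_assoc)
  also have "g [^] (n * k - 1) \<otimes> g [^] (- n * k) = g [^] (- 1 :: int)"
    using int_pow_mult[OF assms(1), of "n * k - 1" "- n * k"] by simp
  finally have "inv g \<otimes> h [^] k = \<one>"
    using rel assms(1) by (simp add: int_pow_neg[of g 1, simplified])
  then show ?thesis
    using assms(1) h by (metis inv_closed int_pow_closed inv_equality inv_inv)
qed

lemma (in group) cable_filling_relation_powers:
  fixes p q u v \<beta> :: int
  assumes t: "t \<in> carrier G" and mu: "mu \<in> carrier G" and lam_mu: "lam \<in> centralizer mu"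
    and det: "p * u - q * v = 1"
    and cable: "mu [^] q \<otimes> lam [^] p = t [^] p"
    and muC: "muC = mu [^] u \<otimes> lam [^] v \<otimes> t [^] (- v)"
    and lamC: "lamC = muC [^] (- (p * q)) \<otimes> t [^] p"
    and filling: "muC [^] (p * q * \<beta> - 1) \<otimes> lamC [^] \<beta> = \<one>"
  shows "mu = t [^] (p * p * \<beta>)" and "lam = t [^] (1 - p * q * \<beta>)"
proof -
  have lam: "lam \<in> carrier G"
    using lam_mu by (simp add: centralizer_def)
  have "t [^] p \<in> centralizer mu" and "t [^] p \<in> centralizer lam"
    unfolding cable[symmetric] using lam_mu mu lam
    by (metis centralizer_mult_closed centralizer_int_pow_closed centralizer_self centralizer_sym)+
  then have "muC \<in> centralizer (t [^] p)"
    unfolding muC using t mu lam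
    by (metis centralizer_mult_closed centralizer_int_pow_closed centralizer_self centralizer_sym
        int_pow_closed int_pow_mem_centralizer_int_pow)
  then have "t [^] p \<in> centralizer muC"
    using t by (simp add: centralizer_sym)
  then have "muC = (t [^] p) [^] \<beta>"
    using filling muC mu lam t by (intro eq_int_pow_of_relation) (simp_all add: lamC)
  then have muC_t: "muC = t [^] (p * \<beta>)"
    using t by (simp add: int_pow_pow)
  have "mu [^] u \<otimes> lam [^] v = muC \<otimes> t [^] v"
    using mu lam t by (simp add: muC m_assoc flip: int_pow_mult)
  then have slope: "mu [^] u \<otimes> lam [^] v = t [^] (p * \<beta> + v)"
    using t by (simp add: muC_t flip: int_pow_mult)
  have "mu = t [^] ((p * \<beta> + v) * p + p * - v)"
    using unimodular_int_pow_solve(1)[OF mu lam_mu det] t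
    by (simp add: slope cable int_pow_pow flip: int_pow_mult)
  then show "mu = t [^] (p * p * \<beta>)"
    by (simp add: algebra_simps)
  have "lam = t [^] ((p * \<beta> + v) * - q + p * u)"
    using unimodular_int_pow_solve(2)[OF mu lam_mu det] t
    by (simp add: slope cable int_pow_pow flip: int_pow_mult)
  then show "lam = t [^] (1 - p * q * \<beta>)"
    using det by (simp add: algebra_simps)
qed

lemma (in group) torus_cable_filling_relation_powers:
  fixes x y p q i j u v \<beta> :: int
  assumes a: "a \<in> carrier G" and b: "b \<in> carrier G" and t: "t \<in> carrier G"
    and q: "q = p * x * y - 1" and det: "p * u - q * v = 1"
    and torus: "a [^] x = b [^] y"
    and mu: "mu = b [^] j \<otimes> a [^] i"
    and lam: "lam = mu [^] (- (x * y)) \<otimes> a [^] x"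
    and cable: "mu [^] q \<otimes> lam [^] p = t [^] p"
    and muC: "muC = mu [^] u \<otimes> lam [^] v \<otimes> t [^] (- v)"
    and lamC: "lamC = muC [^] (- (p * q)) \<otimes> t [^] p"
    and filling: "muC [^] (p * q * \<beta> - 1) \<otimes> lamC [^] \<beta> = \<one>"
  shows "mu = t [^] (p * p * \<beta>)" and "a [^] x = t [^] (p * \<beta> + 1)"
proof -
  define z where "z = a [^] x"
  have zG: "z \<in> carrier G" and muG: "mu \<in> carrier G"
    using a b by (simp_all add: z_def mu)
  have "mu \<in> centralizer z"
    unfolding mu z_def using torus a b
    by (metis centralizer_mult_closed int_pow_closed int_pow_mem_centralizer_int_pow
        centralizer_self)
  then have lam_mu: "lam \<in> centralizer mu"
    unfolding lam z_def[symmetric]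
    by (metis muG zG centralizer_mult_closed centralizer_int_pow_closed centralizer_self
        centralizer_sym)
  note powers = cable_filling_relation_powers[OF t muG lam_mu det cable muC lamC filling]
  then show "mu = t [^] (p * p * \<beta>)" by simp
  have "mu [^] (x * y) \<otimes> lam = (mu [^] (x * y) \<otimes> mu [^] (- (x * y))) \<otimes> z"
    using muG zG by (simp add: lam z_def m_assoc)
  also have "mu [^] (x * y) \<otimes> mu [^] (- (x * y)) = \<one>"
    using int_pow_mult[OF muG, of "x * y" "- (x * y)"] by simp
  finally have "z = mu [^] (x * y) \<otimes> lam"
    using zG by simp
  also have "\<dots> = t [^] (p * p * \<beta> * (x * y) + (1 - p * q * \<beta>))"
    using t by (simp add: powers int_pow_pow flip: int_pow_mult)
  also have "p * p * \<beta> * (x * y) + (1 - p * q * \<beta>) = p * \<beta> + 1"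
    by (simp add: q algebra_simps)
  finally show "a [^] x = t [^] (p * \<beta> + 1)"
    by (simp add: z_def)
qed

lemma bezout_div_add_div_neg:
  fixes x y i j :: int
  assumes x: "2 \<le> x" and y: "2 \<le> y" and bez: "x * j + y * i = 1"
  shows "i div x + j div y < 0"
proof -
  define qi ri qj rj where "qi = i div x" "ri = i mod x" "qj = j div y" "rj = j mod y"
  have not_dvd: "\<not> d dvd 1" if "2 \<le> d" for d :: int
    using that zdvd_imp_le[of d 1] by auto
  have "\<not> x dvd i"
    using not_dvd[OF x] bez by (metis dvd_add_right_iff dvd_triv_left dvd_mult)
  then have ri: "1 \<le> ri"
    using x pos_mod_sign[of x i] by (auto simp: qi_ri_qj_rj_def dvd_eq_mod_eq_0)
  have "\<not> y dvd j"
    using not_dvd[OF y] bez by (metis dvd_add_left_iff dvd_triv_left dvd_mult)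
  then have rj: "1 \<le> rj"
    using y pos_mod_sign[of y j] by (auto simp: qi_ri_qj_rj_def dvd_eq_mod_eq_0)
  have "1 = x * (y * qj + rj) + y * (x * qi + ri)"
    using bez by (simp add: qi_ri_qj_rj_def)
  then have "x * y * (qi + qj) = 1 - x * rj - y * ri"
    by (simp add: algebra_simps)
  also have "\<dots> < 0"
  proof -
    have "x \<le> x * rj" "y \<le> y * ri"
      using rj ri x y by (simp_all add: mult_le_cancel_left1)
    then show ?thesis using x y by linarith
  qed
  finally show ?thesis
    using x y by (simp add: qi_ri_qj_rj_def mult_less_0_iff)
qed

lemma (in group) int_pow_div_mod:
  assumes "a \<in> carrier G" "a [^] x = z"
  shows "a [^] (i::int) = z [^] (i div x) \<otimes> a [^] (i mod x)"
proof -
  have "z [^] (i div x) \<otimes> a [^] (i mod x) = a [^] (x * (i div x)) \<otimes> a [^] (i mod x)"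
    using int_pow_pow[OF assms(1), of x "i div x"] assms(2) by simp
  also have "\<dots> = a [^] (x * (i div x) + i mod x)"
    by (rule int_pow_mult[OF assms(1), symmetric])
  finally show ?thesis
    by simp
qed

locale left_ordered_group = group G for G (structure) +
  fixes leq :: "'a \<Rightarrow> 'a \<Rightarrow> bool" (infix \<open>\<le>\<^sub>o\<close> 50)
  assumes le_refl: "g \<in> carrier G \<Longrightarrow> g \<le>\<^sub>o g"
    and le_antisym: "\<lbrakk>g \<in> carrier G; h \<in> carrier G; g \<le>\<^sub>o h; h \<le>\<^sub>o g\<rbrakk> \<Longrightarrow> g = h"
    and le_trans: "\<lbrakk>g \<in> carrier G; h \<in> carrier G; k \<in> carrier G; g \<le>\<^sub>o h; h \<le>\<^sub>o k\<rbrakk> \<Longrightarrow> g \<le>\<^sub>o k"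
    and le_total: "\<lbrakk>g \<in> carrier G; h \<in> carrier G\<rbrakk> \<Longrightarrow> g \<le>\<^sub>o h \<or> h \<le>\<^sub>o g"
    and mult_left_mono: "\<lbrakk>g \<in> carrier G; h \<in> carrier G; k \<in> carrier G; h \<le>\<^sub>o k\<rbrakk> \<Longrightarrow> g \<otimes> h \<le>\<^sub>o g \<otimes> k"
begin

abbreviation less (infix \<open><\<^sub>o\<close> 50) where "g <\<^sub>o h \<equiv> g \<le>\<^sub>o h \<and> g \<noteq> h"

lemma less_le_trans: "\<lbrakk>g \<in> carrier G; h \<in> carrier G; k \<in> carrier G; g <\<^sub>o h; h \<le>\<^sub>o k\<rbrakk> \<Longrightarrow> g <\<^sub>o k"
  by (metis le_antisym le_trans)

lemma mult_left_strict_mono: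
  "\<lbrakk>g \<in> carrier G; h \<in> carrier G; k \<in> carrier G; h <\<^sub>o k\<rbrakk> \<Longrightarrow> g \<otimes> h <\<^sub>o g \<otimes> k"
  using mult_left_mono by auto

lemma less_or_greater: "\<lbrakk>g \<in> carrier G; h \<in> carrier G; g \<noteq> h\<rbrakk> \<Longrightarrow> g <\<^sub>o h \<or> h <\<^sub>o g"
  using le_total by blast

lemma nat_pow_strict_mono:
  assumes g: "g \<in> carrier G" and w: "w \<in> centralizer g" and "g <\<^sub>o w" "0 < n"
  shows "g [^] (n::nat) <\<^sub>o w [^] n"
  using \<open>0 < n\<close>
proof (induction n rule: nat_induct_non_zero)
  case 1
  then show ?case using assms by (simp add: centralizer_def)
next
  case (Suc n)
  have wG: "w \<in> carrier G" and "w \<otimes> g = g \<otimes> w"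
    using w unfolding centralizer_def by auto
  then have comm: "w [^] n \<otimes> g = g \<otimes> w [^] n"
    using group_commutes_pow g by blast
  have "g \<otimes> g [^] n <\<^sub>o g \<otimes> w [^] n"
    using mult_left_strict_mono Suc.IH g wG by simp
  also have "g \<otimes> w [^] n = w [^] n \<otimes> g"
    using comm by simp
  finally have "g \<otimes> g [^] n <\<^sub>o w [^] n \<otimes> g" .
  moreover have "w [^] n \<otimes> g <\<^sub>o w [^] n \<otimes> w"
    using mult_left_strict_mono assms wG by simp
  ultimately have "g \<otimes> g [^] n <\<^sub>o w [^] n \<otimes> w"
    using less_le_trans g wG by (meson m_closed nat_pow_closed)
  then show ?case
    by (metis g nat_pow_Suc nat_pow_Suc2)
qed

lemma int_pow_strict_mono:
  assumes "g \<in> carrier G" "w \<in> centralizer g" "g <\<^sub>o w" "0 < n"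
  shows "g [^] (n::int) <\<^sub>o w [^] n"
  using nat_pow_strict_mono[OF assms(1-3), of "nat n"] assms(4) by (simp add: pow_nat)

lemma int_pow_eq_one_imp_eq_one:
  assumes g: "g \<in> carrier G" and "g [^] (n::int) = \<one>" "0 < n"
  shows "g = \<one>"
proof (rule ccontr)
  assume "g \<noteq> \<one>"
  have one: "\<one> \<in> centralizer g" "g \<in> centralizer \<one>"
    using g by (simp_all add: centralizer_def)
  from \<open>g \<noteq> \<one>\<close> consider "g <\<^sub>o \<one>" | "\<one> <\<^sub>o g"
    using less_or_greater g by blast
  then have "g [^] n <\<^sub>o \<one> [^] n \<or> \<one> [^] n <\<^sub>o g [^] n"
    using int_pow_strict_mono[OF g one(1)] int_pow_strict_mono[OF one_closed one(2)] \<open>0 < n\<close>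
    by blast
  then show False
    using assms by simp
qed

lemma one_le_int_pow:
  assumes "z \<in> carrier G" "\<one> \<le>\<^sub>o z" "0 \<le> n"
  shows "\<one> \<le>\<^sub>o z [^] (n::int)"
proof (cases "z = \<one> \<or> n = 0")
  case True
  then show ?thesis by (auto simp: le_refl)
next
  case False
  then have "\<one> [^] n <\<^sub>o z [^] n"
    using assms by (intro int_pow_strict_mono) (auto simp: centralizer_def)
  then show ?thesis by simp
qed

lemma int_pow_mono_exponent:
  assumes z: "z \<in> carrier G" "\<one> \<le>\<^sub>o z" and "k \<le> m"
  shows "z [^] (k::int) \<le>\<^sub>o z [^] m"
proof -
  have "\<one> \<le>\<^sub>o z [^] (m - k)"
    using one_le_int_pow z \<open>k \<le> m\<close> by simp
  then have "z [^] k \<otimes> \<one> \<le>\<^sub>o z [^] k \<otimes> z [^] (m - k)"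
    using mult_left_mono[OF int_pow_closed[OF z(1)] one_closed int_pow_closed[OF z(1)]] by simp
  then show ?thesis
    using z by (simp flip: int_pow_mult)
qed

lemma int_pow_less_of_root:
  assumes a: "a \<in> carrier G" and z: "a [^] x = z" "\<one> <\<^sub>o z" and r: "0 \<le> r" "r < (x::int)"
  shows "a [^] r <\<^sub>o z"
proof -
  have one: "\<one> \<in> centralizer a" "a \<in> centralizer \<one>"
    using a by (simp_all add: centralizer_def)
  have "a \<noteq> \<one>"
    using z by auto
  moreover have "\<not> a <\<^sub>o \<one>"
  proof
    assume "a <\<^sub>o \<one>"
    then have "a [^] x <\<^sub>o \<one> [^] x"
      using int_pow_strict_mono[OF a one(1)] r by simp
    then show False
      using z le_antisym a by auto
  qed
  ultimately have "\<one> <\<^sub>o a"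
    using less_or_greater a by blast
  then have "\<one> <\<^sub>o a [^] (x - r)"
    using int_pow_strict_mono[OF one_closed one(2), of "x - r"] r by simp
  then have "a [^] r \<otimes> \<one> <\<^sub>o a [^] r \<otimes> a [^] (x - r)"
    using mult_left_strict_mono[OF int_pow_closed[OF a] one_closed int_pow_closed[OF a]] by simp
  then show ?thesis
    using a z by (simp flip: int_pow_mult)
qed

lemma torus_meridian_less_center:
  fixes x y i j :: int
  assumes a: "a \<in> carrier G" and b: "b \<in> carrier G"
    and z: "a [^] x = z" "b [^] y = z" "\<one> <\<^sub>o z"
    and x: "2 \<le> x" and y: "2 \<le> y" and bez: "x * j + y * i = 1"
  shows "b [^] j \<otimes> a [^] i <\<^sub>o z"
proof -
  define A B where "A = a [^] (i mod x)" and "B = b [^] (j mod y)"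
  have zG: "z \<in> carrier G" and AB: "A \<in> carrier G" "B \<in> carrier G"
    using z a b by (auto simp: A_def B_def)
  have A: "A <\<^sub>o z" and B: "B <\<^sub>o z"
    using int_pow_less_of_root a b z x y by (simp_all add: A_def B_def)
  have "B \<in> centralizer z"
    unfolding B_def using int_pow_mem_centralizer_int_pow[OF b centralizer_self[OF b]] z(2) by metis
  then have Bz: "B \<otimes> z = z \<otimes> B" and Bzq: "B \<otimes> z [^] (i div x) = z [^] (i div x) \<otimes> B"
    using zG int_pow_mem_centralizer_int_pow[OF zG, of B 1 "i div x"]
    unfolding centralizer_def by auto
  have "b [^] j \<otimes> a [^] i = z [^] (j div y) \<otimes> (B \<otimes> z [^] (i div x)) \<otimes> A"
    using int_pow_div_mod[OF a z(1), of i] int_pow_div_mod[OF b z(2), of j] zG AB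
    by (simp add: A_def B_def m_assoc)
  also have "\<dots> = (z [^] (j div y) \<otimes> z [^] (i div x)) \<otimes> (B \<otimes> A)"
    using zG AB by (simp add: Bzq m_assoc)
  also have "z [^] (j div y) \<otimes> z [^] (i div x) = z [^] (i div x + j div y)"
    using int_pow_mult[OF zG, of "j div y" "i div x"] by (simp add: add.commute)
  finally have mu: "b [^] j \<otimes> a [^] i = z [^] (i div x + j div y) \<otimes> (B \<otimes> A)" .
  have "B \<otimes> A <\<^sub>o B \<otimes> z"
    using mult_left_strict_mono[OF AB(2,1) zG A] .
  moreover have "z \<otimes> B <\<^sub>o z \<otimes> z"
    using mult_left_strict_mono[OF zG AB(2) zG B] .
  ultimately have "B \<otimes> A <\<^sub>o z \<otimes> z"
    using less_le_trans[of "B \<otimes> A" "B \<otimes> z" "z \<otimes> z"] AB zG Bz by simp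
  then have "b [^] j \<otimes> a [^] i <\<^sub>o z [^] (i div x + j div y) \<otimes> (z \<otimes> z)"
    unfolding mu
    by (rule mult_left_strict_mono[OF int_pow_closed[OF zG] m_closed[OF AB(2,1)] m_closed[OF zG zG]])
  also have "z [^] (i div x + j div y) \<otimes> (z \<otimes> z) = z [^] (i div x + j div y + 2)"
    using int_pow_mult[OF zG, of "i div x + j div y" 2] int_pow_mult[OF zG, of 1 1] zG by simp
  finally have "b [^] j \<otimes> a [^] i <\<^sub>o z [^] (i div x + j div y + 2)" .
  moreover have "z [^] (i div x + j div y + 2) \<le>\<^sub>o z [^] (1::int)"
    using int_pow_mono_exponent[OF zG, of "i div x + j div y + 2" 1] z(3)
      bezout_div_add_div_neg[OF x y bez]
    by simp
  ultimately show ?thesis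
    using less_le_trans[of "b [^] j \<otimes> a [^] i" "z [^] (i div x + j div y + 2)" z] a b zG by simp
qed

lemma torus_meridian_pow_less_center_pow:
  fixes x y i j N M :: int
  assumes a: "a \<in> carrier G" and b: "b \<in> carrier G"
    and z: "a [^] x = z" "b [^] y = z" "\<one> <\<^sub>o z"
    and x: "2 \<le> x" and y: "2 \<le> y" and bez: "x * j + y * i = 1"
    and N: "0 < N" "N \<le> M"
  shows "(b [^] j \<otimes> a [^] i) [^] N <\<^sub>o z [^] M"
proof -
  define mu where "mu = b [^] j \<otimes> a [^] i"
  have zG: "z \<in> carrier G" and muG: "mu \<in> carrier G"
    using z a b by (auto simp: mu_def)
  have "mu \<in> centralizer z"
    unfolding mu_def
    using centralizer_mult_closed[OF zG] int_pow_mem_centralizer_int_pow centralizer_self a b z(1,2)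
    by metis
  then have "mu [^] N <\<^sub>o z [^] N"
    using int_pow_strict_mono[OF muG _ _ N(1)] centralizer_sym[OF zG]
      torus_meridian_less_center[OF a b z x y bez] by (simp add: mu_def)
  moreover have "z [^] N \<le>\<^sub>o z [^] M"
    using int_pow_mono_exponent zG z(3) N(2) by simp
  ultimately show ?thesis
    using less_le_trans muG zG unfolding mu_def by (meson int_pow_closed)
qed

end

lemma left_ordered_group_dual:
  assumes "left_ordered_group G leq"
  shows "left_ordered_group G (\<lambda>g h. leq h g)"
proof -
  interpret left_ordered_group G leq by fact
  show ?thesis
    by (unfold_locales; meson le_refl le_antisym le_trans le_total mult_left_mono)
qed

lemma (in left_ordered_group) torus_meridian_pow_ne_center_pow:
  fixes x y i j N M :: int
  assumes a: "a \<in> carrier G" and b: "b \<in> carrier G"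
    and z: "a [^] x = z" "b [^] y = z" "z \<noteq> \<one>"
    and x: "2 \<le> x" and y: "2 \<le> y" and bez: "x * j + y * i = 1"
    and N: "0 < N" "N \<le> M"
  shows "(b [^] j \<otimes> a [^] i) [^] N \<noteq> z [^] M"
proof -
  interpret dual: left_ordered_group G "\<lambda>g h. h \<le>\<^sub>o g"
    using left_ordered_group_dual left_ordered_group_axioms .
  have "z \<in> carrier G"
    using z a by auto
  then consider "\<one> <\<^sub>o z" | "z <\<^sub>o \<one>"
    using less_or_greater z(3) by blast
  then show ?thesis
  proof cases
    case 1
    then show ?thesis
      using torus_meridian_pow_less_center_pow[OF a b z(1,2) _ x y bez N] by blast
  next
    case 2
    then show ?thesis
      using dual.torus_meridian_pow_less_center_pow[OF a b z(1,2) _ x y bez N] by blast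
  qed
qed

lemma left_orderableE:
  assumes "left_orderable G"
  obtains leq where "left_ordered_group G leq"
proof -
  obtain leq where G: "group G"
    and refl: "\<forall>g\<in>carrier G. leq g g"
    and antisym: "\<forall>g\<in>carrier G. \<forall>h\<in>carrier G. leq g h \<and> leq h g \<longrightarrow> g = h"
    and trans: "\<forall>g\<in>carrier G. \<forall>h\<in>carrier G. \<forall>k\<in>carrier G. leq g h \<and> leq h k \<longrightarrow> leq g k"
    and total: "\<forall>g\<in>carrier G. \<forall>h\<in>carrier G. leq g h \<or> leq h g"
    and mono: "\<forall>g\<in>carrier G. \<forall>h\<in>carrier G. \<forall>k\<in>carrier G.
                 leq h k \<longrightarrow> leq (g \<otimes>\<^bsub>G\<^esub> h) (g \<otimes>\<^bsub>G\<^esub> k)"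
    using assms unfolding left_orderable_def by (elim exE conjE) (rule that)
  have "left_ordered_group G leq"
    by (intro left_ordered_group.intro left_ordered_group_axioms.intro G;
        meson refl antisym trans total mono)
  then show thesis by (rule that)
qed

theorem corollary3p4:
  fixes x y p q i j u v \<beta> :: int
    and Q :: "('g, 'c) monoid_scheme" (structure)
    and a b t mu lam muC lamC :: 'g
  assumes "x \<ge> 2" and "y \<ge> 2" and "coprime x y" and "p \<ge> 2"
    and "q = p * x * y - 1"
    and "x * j + y * i = 1" and "p * u - q * v = 1"
    and "\<beta> \<ge> 1"
    and "group Q" and "left_orderable Q"
    and "a \<in> carrier Q" and "b \<in> carrier Q" and "t \<in> carrier Q"
    and "carrier Q = generate Q {a, b, t}"
    and "a [^] x = b [^] y"
    and "mu = b [^] j \<otimes> a [^] i"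
    and "lam = mu [^] (- (x * y)) \<otimes> a [^] x"
    and "mu [^] q \<otimes> lam [^] p = t [^] p"
    and "muC = mu [^] u \<otimes> lam [^] v \<otimes> t [^] (- v)"
    and "lamC = muC [^] (- (p * q)) \<otimes> t [^] p"
  shows "muC [^] (p * q * \<beta> - 1) \<otimes> lamC [^] \<beta> \<noteq> \<one>"
proof
  assume filling: "muC [^] (p * q * \<beta> - 1) \<otimes> lamC [^] \<beta> = \<one>"
  interpret group Q by fact
  obtain leq where "left_ordered_group Q leq"
    using left_orderableE \<open>left_orderable Q\<close> by blast
  then interpret left_ordered_group Q leq .
  note a = \<open>a \<in> carrier Q\<close> and b = \<open>b \<in> carrier Q\<close> and t = \<open>t \<in> carrier Q\<close>
  have mu: "mu = t [^] (p * p * \<beta>)" and z: "a [^] x = t [^] (p * \<beta> + 1)"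
    using torus_cable_filling_relation_powers[OF a b t assms(5,7,15-20) filling] by blast+
  have p\<beta>: "2 \<le> p * \<beta>"
    using mult_mono[of 2 p 1 \<beta>] assms(4,8) by simp
  have "2 * (p * \<beta>) \<le> p * (p * \<beta>)"
    by (rule mult_right_mono) (use assms(4) p\<beta> in auto)
  then have N_le_M: "p * \<beta> + 1 \<le> p * p * \<beta>"
    using p\<beta> by (simp add: mult.assoc)
  have "a [^] x \<noteq> \<one>"
  proof
    assume z1: "a [^] x = \<one>"
    have "t = \<one>"
      using int_pow_eq_one_imp_eq_one[OF t, of "p * \<beta> + 1"] z z1 p\<beta> by simp
    moreover have "a = \<one>"
      using int_pow_eq_one_imp_eq_one[OF a, of x] z1 assms(1) by simp
    moreover have "b = \<one>"
      using int_pow_eq_one_imp_eq_one[OF b, of y] z1 assms(2,15) by simp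
    ultimately have "carrier Q = {\<one>}"
      using assms(14) generate_one by simp
    then show False
      using \<open>left_orderable Q\<close> unfolding left_orderable_def by simp
  qed
  moreover have "(b [^] j \<otimes> a [^] i) [^] (p * \<beta> + 1) = (a [^] x) [^] (p * p * \<beta>)"
    using t by (simp add: assms(16)[symmetric] mu z int_pow_pow mult.commute)
  ultimately show False
    using torus_meridian_pow_ne_center_pow[OF a b refl assms(15)[symmetric] _ assms(1,2,6)]
      p\<beta> N_le_M by simp
qed

end
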